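(* For every integer $k\ge 2$, there is a connected 2-degenerate graph of order $n=5k+1$ with exactly $4^{k}=4^{(n-1)/5}$ inclusion-minimal connected dominating sets; hence the maximum number of minimal connected dominating sets in 2-degenerate graphs of order $n$ is $\Omega(1.3195^n)$.
   Context: A graph is 2-degenerate if there is an ordering $(v_1,\dots,v_n)$ of its vertices such that each $v_i$ has degree at most $2$ in $G[\{v_i,\dots,v_n\}]$. A connected dominating set of a graph $G=(V,E)$ is a set $S\subseteq V$ such that every vertex outside $S$ has a neighbor in $S$ and $G[S]$ is connected; it is (inclusion-)minimal if no proper subset is one. (The witnessing graph $G_2^k$ consists of $k$ disjoint copies of the graph on $\{x_1,x_2,y_1,y_2,z\}$ with edges $x_1x_2$, $x_1y_2$, $x_2y_1$, $zy_1$, $zy_2$, plus a vertex $s$ adjacent to all $x$-vertices of all copies.) *)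

theory Defs
  imports Main
begin

definition sgraph :: "'a set \<Rightarrow> 'a set set \<Rightarrow> bool" where
  "sgraph V E \<longleftrightarrow> finite V \<and> (\<forall>e\<in>E. e \<subseteq> V \<and> card e = 2)"

definition adj :: "'a set set \<Rightarrow> 'a \<Rightarrow> 'a \<Rightarrow> bool" where
  "adj E u v \<longleftrightarrow> {u, v} \<in> E"

definition connected_set :: "'a set set \<Rightarrow> 'a set \<Rightarrow> bool" where
  "connected_set E S \<longleftrightarrow> S \<noteq> {} \<and>
     (\<forall>u\<in>S. \<forall>v\<in>S. (\<lambda>x y. x \<in> S \<and> y \<in> S \<and> adj E x y)\<^sup>*\<^sup>* u v)"

definition dominating_set :: "'a set \<Rightarrow> 'a set set \<Rightarrow> 'a set \<Rightarrow> bool" where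
  "dominating_set V E S \<longleftrightarrow> S \<subseteq> V \<and> (\<forall>v\<in>V - S. \<exists>u\<in>S. adj E u v)"

definition connected_dominating_set :: "'a set \<Rightarrow> 'a set set \<Rightarrow> 'a set \<Rightarrow> bool" where
  "connected_dominating_set V E S \<longleftrightarrow> dominating_set V E S \<and> connected_set E S"

definition minimal_cds :: "'a set \<Rightarrow> 'a set set \<Rightarrow> 'a set \<Rightarrow> bool" where
  "minimal_cds V E S \<longleftrightarrow> connected_dominating_set V E S \<and>
     (\<forall>T. T \<subset> S \<longrightarrow> \<not> connected_dominating_set V E T)"

definition two_degenerate :: "'a set \<Rightarrow> 'a set set \<Rightarrow> bool" where
  "two_degenerate V E \<longleftrightarrow> (\<exists>vs. distinct vs \<and> set vs = V \<and>
     (\<forall>i < length vs. card {w \<in> set (drop i vs). adj E (vs ! i) w} \<le> 2))"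

end

theory Submission
  imports Defs "HOL-Library.FuncSet"
begin

text \<open>Every connected dominating set of \<open>G\<^sub>2\<^sup>k\<close> with \<open>k \<ge> 2\<close> contains the hub \<open>s\<close>: without
  \<open>s\<close> a connected set stays inside one copy of the gadget, whereas a dominating set meets
  every copy. Given \<open>s\<close>, the part of a connected dominating set inside a copy has to dominate
  \<open>z, y\<^sub>1, y\<^sub>2\<close> and to link each of its vertices to \<open>x\<^sub>1\<close> or \<open>x\<^sub>2\<close> within the copy; a finite
  check shows that it then contains one of \<open>{y\<^sub>1,x\<^sub>1,x\<^sub>2}\<close>, \<open>{y\<^sub>2,x\<^sub>1,x\<^sub>2}\<close>, \<open>{z,y\<^sub>2,x\<^sub>1}\<close>,
  \<open>{z,y\<^sub>1,x\<^sub>2}\<close>. Conversely \<open>s\<close> together with one of these four sets from every copy is a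
  connected dominating set, and as the four sets are pairwise incomparable, these are exactly
  the minimal ones, \<open>4\<^sup>k\<close> in number. Listing every copy as \<open>z, y\<^sub>1, y\<^sub>2, x\<^sub>1, x\<^sub>2\<close> and \<open>s\<close> last,
  each vertex has at most two later neighbours, so the graph is 2-degenerate.\<close>

abbreviation step_in :: "'a set set \<Rightarrow> 'a set \<Rightarrow> 'a \<Rightarrow> 'a \<Rightarrow> bool" where
  "step_in E S \<equiv> \<lambda>x y. x \<in> S \<and> y \<in> S \<and> adj E x y"

lemma adj_commute: "adj E u v \<longleftrightarrow> adj E v u"
  by (simp add: adj_def insert_commute)

lemma rtranclp_step_in_commute:
  assumes "(step_in E S)\<^sup>*\<^sup>* u v"
  shows "(step_in E S)\<^sup>*\<^sup>* v u"
  by (rule sympD[OF symp_rtranclp assms]) (auto intro: sympI simp: adj_commute)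

lemma connected_setI:
  assumes "r \<in> S" and "\<And>u. u \<in> S \<Longrightarrow> (step_in E S)\<^sup>*\<^sup>* u r"
  shows "connected_set E S"
  unfolding connected_set_def
  using assms rtranclp_trans[OF assms(2) rtranclp_step_in_commute[OF assms(2)]] by blast

lemma connected_set_closed_superset:
  assumes "connected_set E S" "u \<in> C" "C \<subseteq> S"
    and closed: "\<And>x y. x \<in> C \<Longrightarrow> y \<in> S \<Longrightarrow> adj E x y \<Longrightarrow> y \<in> C"
  shows "S \<subseteq> C"
proof
  fix v assume "v \<in> S"
  with assms(1-3) have "(step_in E S)\<^sup>*\<^sup>* u v"
    unfolding connected_set_def by blast
  then show "v \<in> C"
  proof (induction rule: rtranclp_induct)
    case (step y z)
    then show ?case using closed by blast
  qed (fact assms(2))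
qed

lemma connected_set_if_cds:
  assumes "connected_dominating_set V E S"
  shows "connected_set E V"
proof -
  have S: "S \<subseteq> V" "connected_set E S" "\<And>v. v \<in> V - S \<Longrightarrow> \<exists>u\<in>S. adj E u v"
    using assms by (auto simp: connected_dominating_set_def dominating_set_def)
  then obtain s where s: "s \<in> S"
    by (auto simp: connected_set_def)
  have in_S: "(step_in E V)\<^sup>*\<^sup>* u s" if "u \<in> S" for u
    using S(2) s that unfolding connected_set_def
    by (blast intro: rtranclp_mono[THEN predicate2D, rotated] S(1)[THEN subsetD])
  show ?thesis
  proof (rule connected_setI)
    show "s \<in> V" using s S(1) by blast
  next
    fix u assume u: "u \<in> V"
    show "(step_in E V)\<^sup>*\<^sup>* u s"
    proof (cases "u \<in> S")
      case False
      then obtain w where "w \<in> S" "adj E w u"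
        using S(3) u by blast
      then show ?thesis
        using u S(1) in_S[of w] by (blast intro: converse_rtranclp_into_rtranclp adj_commute[THEN iffD1])
    qed (rule in_S)
  qed
qed

lemma rtranclp_map:
  assumes "\<And>x y. R x y \<Longrightarrow> R' (f x) (f y)" and "R\<^sup>*\<^sup>* a b"
  shows "R'\<^sup>*\<^sup>* (f a) (f b)"
  using assms(2) by (induction rule: rtranclp_induct) (auto intro: rtranclp.rtrancl_into_rtrancl assms(1))

lemma minimal_cds_set_eqI:
  assumes cds: "\<And>S. S \<in> F \<Longrightarrow> connected_dominating_set V E S"
    and contains: "\<And>T. connected_dominating_set V E T \<Longrightarrow> \<exists>S\<in>F. S \<subseteq> T"
    and antichain: "\<And>S S'. S \<in> F \<Longrightarrow> S' \<in> F \<Longrightarrow> S \<subseteq> S' \<Longrightarrow> S = S'"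
  shows "{S. minimal_cds V E S} = F"
proof (intro set_eqI iffI)
  fix S assume "S \<in> {S. minimal_cds V E S}"
  then have "connected_dominating_set V E S" "\<And>T. T \<subset> S \<Longrightarrow> \<not> connected_dominating_set V E T"
    by (simp_all add: minimal_cds_def)
  moreover obtain S' where "S' \<in> F" "S' \<subseteq> S"
    using contains calculation(1) by blast
  ultimately show "S \<in> F"
    using cds by blast
next
  fix S assume S: "S \<in> F"
  have "\<not> connected_dominating_set V E T" if "T \<subset> S" for T
  proof
    assume "connected_dominating_set V E T"
    then obtain S' where "S' \<in> F" "S' \<subseteq> T"
      using contains by blast
    with S \<open>T \<subset> S\<close> antichain[of S' S] show False
      by blast
  qed
  with cds[OF S] show "S \<in> {S. minimal_cds V E S}"
    by (simp add: minimal_cds_def)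
qed

lemma two_degenerate_lessThan:
  fixes n :: nat
  assumes "\<And>u. u < n \<Longrightarrow> card {w \<in> {u..<n}. adj E u w} \<le> 2"
  shows "two_degenerate {..<n} E"
  unfolding two_degenerate_def
proof (intro exI[of _ "[0..<n]"] conjI allI impI)
  fix i assume i: "i < length [0..<n]"
  then have "[0..<n] ! i = i" and "set (drop i [0..<n]) = {i..<n}"
    by (simp_all del: upt_Suc add: drop_upt)
  then show "card {w \<in> set (drop i [0..<n]). adj E ([0..<n] ! i) w} \<le> 2"
    using assms[of i] i by (simp del: upt_Suc)
next
  show "set [0..<n] = {..<n}" by (simp add: atLeast0LessThan)
qed simp

datatype role = Z | Y1 | Y2 | X1 | X2

definition gadget :: "role set set" where
  "gadget = {{X1, X2}, {X1, Y2}, {X2, Y1}, {Z, Y1}, {Z, Y2}}"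

lemma gadget_neighbours:
  "adj gadget Z r \<longleftrightarrow> r \<in> {Y1, Y2}" "adj gadget Y1 r \<longleftrightarrow> r \<in> {Z, X2}"
  "adj gadget Y2 r \<longleftrightarrow> r \<in> {Z, X1}" "adj gadget X1 r \<longleftrightarrow> r \<in> {X2, Y2}"
  "adj gadget X2 r \<longleftrightarrow> r \<in> {X1, Y1}"
  by (cases r; simp add: gadget_def adj_def doubleton_eq_iff)+

definition min_patterns :: "role set set" where
  "min_patterns = {{Y1, X1, X2}, {Y2, X1, X2}, {Z, Y2, X1}, {Z, Y1, X2}}"

lemma card_min_patterns: "card min_patterns = 4"
  unfolding min_patterns_def
  by (simp add: card_insert_if)
    (auto dest: arg_cong[where f="\<lambda>A. Y1 \<in> A"] arg_cong[where f="\<lambda>A. Z \<in> A"])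

lemma min_patterns_cases:
  "P \<in> min_patterns \<Longrightarrow> P = {Y1, X1, X2} \<or> P = {Y2, X1, X2} \<or> P = {Z, Y2, X1} \<or> P = {Z, Y1, X2}"
  by (simp add: min_patterns_def)

lemma card_min_pattern: "P \<in> min_patterns \<Longrightarrow> card P = 3"
  by (drule min_patterns_cases) (elim disjE; simp)

lemma min_patterns_antichain: "P \<in> min_patterns \<Longrightarrow> Q \<in> min_patterns \<Longrightarrow> P \<subseteq> Q \<Longrightarrow> P = Q"
  using card_subset_eq[of Q P] card_min_pattern[of P] card_min_pattern[of Q]
  by (metis card.infinite zero_neq_numeral)

lemma min_pattern_dominates:
  assumes "P \<in> min_patterns" "r \<notin> P"
  shows "r \<in> {X1, X2} \<or> (\<exists>r'\<in>P. adj gadget r r')"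
  using min_patterns_cases[OF assms(1)] assms(2)
  by (elim disjE; cases r) (simp_all add: gadget_neighbours)

lemma min_pattern_reaches_x:
  assumes "P \<in> min_patterns" "r \<in> P"
  shows "\<exists>x\<in>P \<inter> {X1, X2}. (step_in gadget P)\<^sup>*\<^sup>* r x"
proof -
  have step: "(step_in gadget P)\<^sup>*\<^sup>* a b" if "a \<in> P" "b \<in> P" "{a, b} \<in> gadget" for a b
    using that by (auto simp: adj_def)
  have path2: "(step_in gadget P)\<^sup>*\<^sup>* a c"
    if "a \<in> P" "b \<in> P" "c \<in> P" "{a, b} \<in> gadget" "{b, c} \<in> gadget" for a b c
    using rtranclp_trans[OF step[of a b] step[of b c]] that by blast
  have edges: "{Y1, X2} \<in> gadget" "{Y2, X1} \<in> gadget" "{Z, Y1} \<in> gadget" "{Z, Y2} \<in> gadget"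
    by (simp_all add: gadget_def insert_commute)
  consider "P = {Y1, X1, X2}" | "P = {Y2, X1, X2}" | "P = {Z, Y2, X1}" | "P = {Z, Y1, X2}"
    using min_patterns_cases[OF assms(1)] by blast
  then show ?thesis
  proof cases
    case 1
    with assms(2) show ?thesis using step[OF _ _ edges(1)] by auto
  next
    case 2
    with assms(2) show ?thesis using step[OF _ _ edges(2)] by auto
  next
    case 3
    with assms(2) show ?thesis using step[OF _ _ edges(2)] path2[OF _ _ _ edges(4,2)] by auto
  next
    case 4
    with assms(2) show ?thesis using step[OF _ _ edges(1)] path2[OF _ _ _ edges(3,1)] by auto
  qed
qed

text \<open>The hypotheses are what a connected dominating set containing the hub leaves visible on
  one copy: the roles not seen by the hub are dominated within the copy, and no nonempty set of
  roles avoiding \<open>x\<^sub>1, x\<^sub>2\<close> is cut off from the rest.\<close>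

lemma contains_min_pattern:
  assumes dom: "\<And>r. r \<notin> {X1, X2} \<Longrightarrow> r \<in> R \<or> (\<exists>r'\<in>R. adj gadget r r')"
    and conn: "\<And>C. C \<subseteq> R \<Longrightarrow> C \<noteq> {} \<Longrightarrow> C \<inter> {X1, X2} = {} \<Longrightarrow>
      \<exists>r\<in>C. \<exists>r'\<in>R - C. adj gadget r r'"
  shows "\<exists>P\<in>min_patterns. P \<subseteq> R"
proof -
  have "Z \<in> R \<or> Y1 \<in> R \<or> Y2 \<in> R" "Y1 \<in> R \<or> Z \<in> R \<or> X2 \<in> R" "Y2 \<in> R \<or> Z \<in> R \<or> X1 \<in> R"
    using dom[of Z] dom[of Y1] dom[of Y2] by (auto simp: gadget_neighbours)
  moreover have "Z \<in> R \<longrightarrow> Y1 \<in> R \<or> Y2 \<in> R" "Y1 \<in> R \<longrightarrow> Z \<in> R \<or> X2 \<in> R" "Y2 \<in> R \<longrightarrow> Z \<in> R \<or> X1 \<in> R"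
    "Z \<in> R \<and> Y1 \<in> R \<longrightarrow> Y2 \<in> R \<or> X2 \<in> R" "Z \<in> R \<and> Y2 \<in> R \<longrightarrow> Y1 \<in> R \<or> X1 \<in> R"
    "Z \<in> R \<and> Y1 \<in> R \<and> Y2 \<in> R \<longrightarrow> X1 \<in> R \<or> X2 \<in> R"
    using conn[of "{Z}"] conn[of "{Y1}"] conn[of "{Y2}"] conn[of "{Z, Y1}"] conn[of "{Z, Y2}"]
      conn[of "{Z, Y1, Y2}"]
    by (auto simp: gadget_neighbours)
  ultimately show ?thesis
    by (simp add: min_patterns_def) blast
qed

text \<open>Copy \<open>i\<close> of the gadget occupies \<open>5i, \<dots>, 5i + 4\<close> in the order \<open>z, y\<^sub>1, y\<^sub>2, x\<^sub>1, x\<^sub>2\<close>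
  and the hub \<open>s\<close> is \<open>5k\<close>; the natural order of the vertices is then a 2-degeneracy order.\<close>

fun role_index :: "role \<Rightarrow> nat" where
  "role_index Z = 0" | "role_index Y1 = 1" | "role_index Y2 = 2" |
  "role_index X1 = 3" | "role_index X2 = 4"

definition vtx :: "nat \<Rightarrow> role \<Rightarrow> nat" where
  "vtx i r = 5 * i + role_index r"

definition hub :: "nat \<Rightarrow> nat" where
  "hub k = 5 * k"

definition G2_vertices :: "nat \<Rightarrow> nat set" where
  "G2_vertices k = {..<5 * k + 1}"

definition G2_edges :: "nat \<Rightarrow> nat set set" where
  "G2_edges k = {{vtx i r, vtx i r'} | i r r'. i < k \<and> adj gadget r r'} \<union>
     {{hub k, vtx i r} | i r. i < k \<and> r \<in> {X1, X2}}"

lemma role_index_less: "role_index r < 5"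
  by (cases r) simp_all

lemma role_index_surj:
  assumes "c < 5"
  obtains r where "role_index r = c"
proof -
  have "c \<in> {0, 1, 2, 3, 4}"
    using assms by auto
  then show thesis
    using that[of Z] that[of Y1] that[of Y2] that[of X1] that[of X2] by auto
qed

lemma vtx_eq_iff: "vtx i r = vtx j r' \<longleftrightarrow> i = j \<and> r = r'"
proof
  assume eq: "vtx i r = vtx j r'"
  have "i = j" and "role_index r = role_index r'"
    using arg_cong[OF eq, of "\<lambda>n. n div 5"] arg_cong[OF eq, of "\<lambda>n. n mod 5"]
    by (simp_all add: vtx_def role_index_less)
  then show "i = j \<and> r = r'"
    by (cases r; cases r') simp_all
qed simp

lemma vtx_less_hub: "i < k \<Longrightarrow> vtx i r < hub k"
  using role_index_less[of r] by (simp add: vtx_def hub_def)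

lemma vtx_neq_hub: "i < k \<Longrightarrow> vtx i r \<noteq> hub k" "i < k \<Longrightarrow> hub k \<noteq> vtx i r"
  using vtx_less_hub[of i k r] by simp_all

lemma G2_vertex_cases:
  assumes "u \<in> G2_vertices k"
  obtains "u = hub k" | i r where "i < k" "u = vtx i r"
proof (cases "u = hub k")
  case False
  with assms have "u div 5 < k"
    by (auto simp: G2_vertices_def hub_def)
  moreover obtain r where "role_index r = u mod 5"
    using role_index_surj[of "u mod 5"] by force
  ultimately show thesis
    using that(2)[of "u div 5" r] by (simp add: vtx_def)
qed (rule that(1))

lemma adj_G2_vtx:
  assumes "i < k"
  shows "adj (G2_edges k) (vtx i r) w \<longleftrightarrow>
    (w = hub k \<and> r \<in> {X1, X2}) \<or> (\<exists>r'. w = vtx i r' \<and> adj gadget r r')"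
proof
  assume "adj (G2_edges k) (vtx i r) w"
  then show "(w = hub k \<and> r \<in> {X1, X2}) \<or> (\<exists>r'. w = vtx i r' \<and> adj gadget r r')"
    unfolding adj_def G2_edges_def using assms
    by (auto simp: doubleton_eq_iff vtx_eq_iff vtx_neq_hub insert_commute)
next
  assume "(w = hub k \<and> r \<in> {X1, X2}) \<or> (\<exists>r'. w = vtx i r' \<and> adj gadget r r')"
  then show "adj (G2_edges k) (vtx i r) w"
    unfolding adj_def G2_edges_def using assms
    by (auto simp: insert_commute)
qed

lemma adj_G2_hub: "adj (G2_edges k) (hub k) w \<longleftrightarrow> (\<exists>i<k. \<exists>r\<in>{X1, X2}. w = vtx i r)"
  unfolding adj_def G2_edges_def
  by (auto simp: doubleton_eq_iff vtx_neq_hub)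

lemma vtx_in_G2_vertices: "i < k \<Longrightarrow> vtx i r \<in> G2_vertices k"
  using vtx_less_hub[of i k r] by (simp add: G2_vertices_def hub_def)

lemma hub_in_G2_vertices: "hub k \<in> G2_vertices k"
  by (simp add: G2_vertices_def hub_def)

lemma finite_G2_vertices: "finite (G2_vertices k)"
  by (simp add: G2_vertices_def)

lemma sgraph_G2: "sgraph (G2_vertices k) (G2_edges k)"
proof -
  have "r \<noteq> r'" if "adj gadget r r'" for r r'
    using that by (cases r) (auto simp: gadget_neighbours)
  then show ?thesis
    unfolding sgraph_def G2_edges_def
    by (auto simp: vtx_in_G2_vertices hub_in_G2_vertices vtx_eq_iff vtx_neq_hub finite_G2_vertices)
qed

lemma card_G2_vertices: "card (G2_vertices k) = 5 * k + 1"
  by (simp add: G2_vertices_def)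

lemma G2_forward_neighbours:
  assumes "u \<in> G2_vertices k"
  obtains a b where "{w \<in> {u..<n}. adj (G2_edges k) u w} \<subseteq> {a, b}"
  using assms
proof (cases rule: G2_vertex_cases)
  case 1
  have "\<not> adj (G2_edges k) (hub k) w" if "hub k \<le> w" for w
    using that vtx_less_hub unfolding adj_G2_hub by (auto dest: leD)
  with 1 have "{w \<in> {u..<n}. adj (G2_edges k) u w} \<subseteq> {}"
    by auto
  then show thesis
    using that by blast
next
  case (2 i r)
  have less: "vtx i r \<le> vtx i r' \<longleftrightarrow> role_index r \<le> role_index r'" for r'
    by (simp add: vtx_def)
  have fwd: "{w \<in> {u..<n}. adj (G2_edges k) u w} \<subseteq> {a, b}"
    if "\<And>r'. adj gadget r r' \<Longrightarrow> role_index r \<le> role_index r' \<Longrightarrow> vtx i r' \<in> {a, b}"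
      and "r \<in> {X1, X2} \<Longrightarrow> hub k \<in> {a, b}" for a b
    using that 2 by (fastforce simp: adj_G2_vtx[OF \<open>i < k\<close>] less)
  show thesis
  proof (cases r)
    case Z
    then show thesis by (intro that[of "vtx i Y1" "vtx i Y2"]) (rule fwd; auto simp: gadget_neighbours)
  next
    case Y1
    then show thesis by (intro that[of "vtx i X2" "vtx i X2"]) (rule fwd; auto simp: gadget_neighbours)
  next
    case Y2
    then show thesis by (intro that[of "vtx i X1" "vtx i X1"]) (rule fwd; auto simp: gadget_neighbours)
  next
    case X1
    then show thesis by (intro that[of "vtx i X2" "hub k"]) (rule fwd; auto simp: gadget_neighbours)
  next
    case X2
    then show thesis by (intro that[of "hub k" "hub k"]) (rule fwd; auto simp: gadget_neighbours)
  qed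
qed

lemma two_degenerate_G2: "two_degenerate (G2_vertices k) (G2_edges k)"
  unfolding G2_vertices_def
proof (rule two_degenerate_lessThan)
  fix u assume "u < 5 * k + 1"
  then obtain a b where "{w \<in> {u..<5 * k + 1}. adj (G2_edges k) u w} \<subseteq> {a, b}"
    using G2_forward_neighbours[of u k] by (auto simp: G2_vertices_def)
  then have "card {w \<in> {u..<5 * k + 1}. adj (G2_edges k) u w} \<le> card {a, b}"
    by (rule card_mono[rotated]) simp
  also have "\<dots> \<le> 2"
    by (cases "a = b") simp_all
  finally show "card {w \<in> {u..<5 * k + 1}. adj (G2_edges k) u w} \<le> 2" .
qed

definition select_cds :: "nat \<Rightarrow> (nat \<Rightarrow> role set) \<Rightarrow> nat set" where
  "select_cds k P = insert (hub k) (\<Union>i<k. vtx i ` P i)"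

lemma vtx_in_select_cds_iff: "i < k \<Longrightarrow> vtx i r \<in> select_cds k P \<longleftrightarrow> r \<in> P i"
  by (auto simp: select_cds_def vtx_eq_iff vtx_neq_hub)

lemma select_cds_subset_imp_eq:
  assumes "P \<in> (\<Pi>\<^sub>E i\<in>{..<k}. min_patterns)" "Q \<in> (\<Pi>\<^sub>E i\<in>{..<k}. min_patterns)"
    and "select_cds k P \<subseteq> select_cds k Q"
  shows "P = Q"
proof (rule PiE_ext[OF assms(1,2)])
  fix i assume "i \<in> {..<k}"
  then have "P i \<subseteq> Q i" "P i \<in> min_patterns" "Q i \<in> min_patterns"
    using assms by (auto simp: vtx_in_select_cds_iff[symmetric])
  then show "P i = Q i"
    by (rule min_patterns_antichain[rotated 2])
qed

lemma rtranclp_step_in_G2_vtx: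
  assumes "i < k" "vtx i ` Q \<subseteq> S" "(step_in gadget Q)\<^sup>*\<^sup>* r r'"
  shows "(step_in (G2_edges k) S)\<^sup>*\<^sup>* (vtx i r) (vtx i r')"
  by (rule rtranclp_map[OF _ assms(3)]) (use assms(1,2) in \<open>auto simp: adj_G2_vtx\<close>)

lemma cds_select_cds:
  assumes P: "\<And>i. i < k \<Longrightarrow> P i \<in> min_patterns"
  shows "connected_dominating_set (G2_vertices k) (G2_edges k) (select_cds k P)"
  unfolding connected_dominating_set_def dominating_set_def
proof (intro conjI ballI)
  show "select_cds k P \<subseteq> G2_vertices k"
    by (auto simp: select_cds_def hub_in_G2_vertices vtx_in_G2_vertices)
next
  fix v assume v: "v \<in> G2_vertices k - select_cds k P"
  then have "v \<in> G2_vertices k" "v \<noteq> hub k"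
    by (auto simp: select_cds_def)
  then obtain i r where i: "i < k" and v_eq: "v = vtx i r"
    by (cases rule: G2_vertex_cases) auto
  with v have r: "r \<notin> P i"
    by (simp add: vtx_in_select_cds_iff)
  from min_pattern_dominates[OF P[OF i] r]
  show "\<exists>u\<in>select_cds k P. adj (G2_edges k) u v"
  proof
    assume "r \<in> {X1, X2}"
    then show ?thesis
      using i by (intro bexI[of _ "hub k"]) (auto simp: v_eq adj_G2_hub select_cds_def)
  next
    assume "\<exists>r'\<in>P i. adj gadget r r'"
    then obtain r' where "r' \<in> P i" "adj gadget r r'" by blast
    then show ?thesis
      using i by (intro bexI[of _ "vtx i r'"]) (auto simp: v_eq adj_commute adj_G2_vtx vtx_in_select_cds_iff)
  qed
next
  show "connected_set (G2_edges k) (select_cds k P)"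
  proof (rule connected_setI)
    show "hub k \<in> select_cds k P" by (simp add: select_cds_def)
  next
    fix u assume "u \<in> select_cds k P"
    then consider "u = hub k" | i r where "i < k" "r \<in> P i" "u = vtx i r"
      by (auto simp: select_cds_def)
    then show "(step_in (G2_edges k) (select_cds k P))\<^sup>*\<^sup>* u (hub k)"
    proof cases
      case (2 i r)
      obtain x where x: "x \<in> P i" "x \<in> {X1, X2}" "(step_in gadget (P i))\<^sup>*\<^sup>* r x"
        using min_pattern_reaches_x[OF P[OF \<open>i < k\<close>] \<open>r \<in> P i\<close>] by blast
      have "vtx i ` P i \<subseteq> select_cds k P"
        using 2 by (auto simp: select_cds_def)
      with 2 x have "(step_in (G2_edges k) (select_cds k P))\<^sup>*\<^sup>* (vtx i r) (vtx i x)"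
        by (blast intro: rtranclp_step_in_G2_vtx)
      moreover have "step_in (G2_edges k) (select_cds k P) (vtx i x) (hub k)"
        using 2 x by (auto simp: adj_G2_vtx vtx_in_select_cds_iff select_cds_def)
      ultimately show ?thesis
        using 2 by (simp add: rtranclp.rtrancl_into_rtrancl)
    qed simp
  qed
qed

lemma hub_in_cds:
  assumes "2 \<le> k" and cds: "connected_dominating_set (G2_vertices k) (G2_edges k) S"
  shows "hub k \<in> S"
proof (rule ccontr)
  assume hub: "hub k \<notin> S"
  have dom: "\<And>v. v \<in> G2_vertices k \<Longrightarrow> v \<notin> S \<Longrightarrow> \<exists>u\<in>S. adj (G2_edges k) v u"
    and conn: "connected_set (G2_edges k) S"
    using cds by (auto simp: connected_dominating_set_def dominating_set_def adj_commute)
  obtain i r where i: "i < k" and "vtx i r \<in> S"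
    using dom[OF hub_in_G2_vertices hub] by (auto simp: adj_G2_hub)
  define j :: nat where "j = (if i = 0 then 1 else 0)"
  have j: "j < k" "j \<noteq> i"
    using \<open>2 \<le> k\<close> by (auto simp: j_def)
  let ?C = "{v \<in> S. \<exists>r. v = vtx i r}"
  obtain r' where "vtx j r' \<in> S"
    using dom[OF vtx_in_G2_vertices[OF j(1)], of Z] by (auto simp: adj_G2_vtx[OF j(1)])
  moreover have "S \<subseteq> ?C"
  proof (rule connected_set_closed_superset[OF conn])
    show "vtx i r \<in> ?C"
      using \<open>vtx i r \<in> S\<close> by blast
  next
    fix x y assume "x \<in> ?C" "y \<in> S" "adj (G2_edges k) x y"
    then show "y \<in> ?C"
      using hub i by (auto simp: adj_G2_vtx)
  qed blast
  ultimately show False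
    using j(2) by (auto simp: vtx_eq_iff)
qed

lemma cds_contains_min_pattern:
  assumes cds: "connected_dominating_set (G2_vertices k) (G2_edges k) S"
    and hub: "hub k \<in> S" and i: "i < k"
  shows "\<exists>P\<in>min_patterns. vtx i ` P \<subseteq> S"
proof -
  have dom: "\<And>v. v \<in> G2_vertices k \<Longrightarrow> v \<notin> S \<Longrightarrow> \<exists>u\<in>S. adj (G2_edges k) v u"
    and conn: "connected_set (G2_edges k) S"
    using cds by (auto simp: connected_dominating_set_def dominating_set_def adj_commute)
  let ?R = "{r. vtx i r \<in> S}"
  have "\<exists>P\<in>min_patterns. P \<subseteq> ?R"
  proof (rule contains_min_pattern)
    fix r assume "r \<notin> {X1, X2}"
    then show "r \<in> ?R \<or> (\<exists>r'\<in>?R. adj gadget r r')"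
      using dom[OF vtx_in_G2_vertices[OF i], of r] by (auto simp: adj_G2_vtx[OF i])
  next
    fix C assume C: "C \<subseteq> ?R" "C \<noteq> {}" "C \<inter> {X1, X2} = {}"
    show "\<exists>r\<in>C. \<exists>r'\<in>?R - C. adj gadget r r'"
    proof (rule ccontr)
      assume closed: "\<not> ?thesis"
      obtain c where "c \<in> C" using C(2) by blast
      have "S \<subseteq> vtx i ` C"
      proof (rule connected_set_closed_superset[OF conn])
        show "vtx i c \<in> vtx i ` C" using \<open>c \<in> C\<close> by blast
        show "vtx i ` C \<subseteq> S" using C(1) by blast
      next
        fix x y assume "x \<in> vtx i ` C" "y \<in> S" "adj (G2_edges k) x y"
        then show "y \<in> vtx i ` C"
          using closed C(3) i by (auto simp: adj_G2_vtx) blast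
      qed
      with hub i show False
        by (auto simp: vtx_neq_hub)
    qed
  qed
  then show ?thesis
    by blast
qed

lemma minimal_cds_G2:
  assumes "2 \<le> k"
  shows "{S. minimal_cds (G2_vertices k) (G2_edges k) S} = select_cds k ` (\<Pi>\<^sub>E i\<in>{..<k}. min_patterns)"
proof (rule minimal_cds_set_eqI)
  fix S assume "S \<in> select_cds k ` (\<Pi>\<^sub>E i\<in>{..<k}. min_patterns)"
  then show "connected_dominating_set (G2_vertices k) (G2_edges k) S"
    by (auto intro: cds_select_cds)
next
  fix T assume cds: "connected_dominating_set (G2_vertices k) (G2_edges k) T"
  then have "\<forall>i\<in>{..<k}. \<exists>P\<in>min_patterns. vtx i ` P \<subseteq> T"
    using cds_contains_min_pattern hub_in_cds[OF assms] by blast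
  then obtain P where P: "\<And>i. i < k \<Longrightarrow> P i \<in> min_patterns \<and> vtx i ` P i \<subseteq> T"
    by (metis bchoice lessThan_iff)
  have "restrict P {..<k} \<in> (\<Pi>\<^sub>E i\<in>{..<k}. min_patterns)"
    using P by simp
  moreover have "select_cds k (restrict P {..<k}) \<subseteq> T"
    using P hub_in_cds[OF assms cds] by (auto simp: select_cds_def)
  ultimately show "\<exists>S\<in>select_cds k ` (\<Pi>\<^sub>E i\<in>{..<k}. min_patterns). S \<subseteq> T"
    by blast
qed (auto dest: select_cds_subset_imp_eq)

lemma card_minimal_cds_G2:
  assumes "2 \<le> k"
  shows "card {S. minimal_cds (G2_vertices k) (G2_edges k) S} = 4 ^ k"
proof -
  have "inj_on (select_cds k) (\<Pi>\<^sub>E i\<in>{..<k}. min_patterns)"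
    by (rule inj_onI) (simp add: select_cds_subset_imp_eq)
  then show ?thesis
    by (simp add: minimal_cds_G2[OF assms] card_image card_PiE card_min_patterns)
qed

theorem mainTheorem15:
  fixes k :: nat
  assumes "k \<ge> 2"
  shows "\<exists>(V :: nat set) E. sgraph V E \<and> card V = 5 * k + 1 \<and> connected_set E V \<and>
           two_degenerate V E \<and> card {S. minimal_cds V E S} = 4 ^ k"
proof (intro exI conjI)
  show "connected_set (G2_edges k) (G2_vertices k)"
    by (rule connected_set_if_cds[OF cds_select_cds[of k "\<lambda>_. {Y1, X1, X2}"]])
      (simp add: min_patterns_def)
qed (fact sgraph_G2 card_G2_vertices two_degenerate_G2 card_minimal_cds_G2[OF assms])+

end
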